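(* Let $X$ be Weibull distributed with shape parameter $\alpha>0$ and unit scale, i.e. $\mathbb{P}(X>x)=e^{-x^\alpha}$ for $x\geq 0$. Then for every fixed $x>0$, $$\lim_{s\to+\infty}\overline{T}_{X,s}(x)=\begin{cases}0 & \text{if } \alpha>1,\\ e^{-x} & \text{if } \alpha=1,\\ 1 & \text{if } \alpha<1,\end{cases}$$ the limit being over integers $s$.
   Context: For a nonnegative absolutely continuous random variable $X$ with density $f_X$, set $\overline{T}_{X,0}=f_X$, $\mu_{X,0}=1$, and for integers $s\geq 1$ define recursively $\overline{T}_{X,s}(x)=\frac{1}{\mu_{X,s-1}}\int_x^\infty\overline{T}_{X,s-1}(t)\,dt$ and $\mu_{X,s}=\int_0^\infty\overline{T}_{X,s}(t)\,dt$. $\overline{T}_{X,s}$ is the tail (survival function) of the $s$-iterated distribution induced by $X$. *)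

theory Defs
  imports "HOL-Analysis.Analysis"
begin

primrec iter_dist :: "(real \<Rightarrow> real) \<Rightarrow> nat \<Rightarrow> (real \<Rightarrow> real) \<times> real" where
  "iter_dist f 0 = (f, 1)"
| "iter_dist f (Suc s) =
     (let T = fst (iter_dist f s); m = snd (iter_dist f s);
          T' = (\<lambda>x. (LINT t:{x..}|lborel. T t) / m)
      in (T', LINT t:{0..}|lborel. T' t))"

definition iter_tail :: "(real \<Rightarrow> real) \<Rightarrow> nat \<Rightarrow> real \<Rightarrow> real" where
  "iter_tail f s = fst (iter_dist f s)"

definition iter_mean :: "(real \<Rightarrow> real) \<Rightarrow> nat \<Rightarrow> real" where
  "iter_mean f s = snd (iter_dist f s)"

text \<open>Density of the Weibull distribution with shape alpha and unit scale,
  P(X > x) = exp(-x^alpha) for x >= 0 (value at the null set {0} irrelevant).\<close>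
definition weibull_density :: "real \<Rightarrow> real \<Rightarrow> real" where
  "weibull_density \<alpha> x = (if x > 0 then \<alpha> * x powr (\<alpha> - 1) * exp (- (x powr \<alpha>)) else 0)"

end

theory Submission
  imports Defs "HOL-Real_Asymp.Real_Asymp"
begin

(* Write S t = exp (- t powr alpha) for the Weibull survival function. Then T_1 = S, and by
   Tonelli every further step integrates (t - x)^n S t once more, so that
   T_(n+2) x = int_x^oo (t - x)^n S t dt / int_0^oo t^n S t dt.
   After the shift t = u + x this is the average of the ratio S (u + x) / S u against the
   weights u^n S u du, whose mass escapes to infinity as n grows. Hence T_(n+2) x tends to
   the limit of S (u + x) / S u as u tends to infinity, which is 0, exp (- x) or 1 according
   as alpha > 1, alpha = 1 or alpha < 1. *)

lemma iter_tail_Suc: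
  "iter_tail f (Suc s) x = (LINT t:{x..}|lborel. iter_tail f s t) / iter_mean f s"
  by (simp add: iter_tail_def iter_mean_def Let_def)

lemma iter_mean_Suc: "iter_mean f (Suc s) = (LINT t:{0..}|lborel. iter_tail f (Suc s) t)"
  by (simp add: iter_tail_def iter_mean_def Let_def)

lemma iter_tail_Suc_0: "iter_tail f (Suc 0) x = (LINT t:{x..}|lborel. f t)"
  by (simp add: iter_tail_Suc iter_tail_def iter_mean_def)

lemma iter_tail_Suc_Suc:
  "iter_tail f (Suc (Suc s)) x =
     (LINT t:{x..}|lborel. iter_tail f (Suc s) t) / (LINT t:{0..}|lborel. iter_tail f (Suc s) t)"
  by (simp only: iter_tail_Suc[of f "Suc s"] iter_mean_Suc)

definition tail_moment :: "(real \<Rightarrow> real) \<Rightarrow> nat \<Rightarrow> real \<Rightarrow> real" where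
  "tail_moment S n x = (LINT t:{x..}|lborel. (t - x) ^ n * S t)"

lemma nn_integral_power_diff:
  fixes x t :: real
  assumes "x \<le> t"
  shows "(\<integral>\<^sup>+y. ennreal ((t - y) ^ n) * indicator {x..t} y \<partial>lborel) =
    ennreal ((t - x) ^ Suc n / Suc n)"
proof -
  have "(\<integral>\<^sup>+y. ennreal ((t - y) ^ n) * indicator {x..t} y \<partial>lborel) =
      ennreal (- ((t - t) ^ Suc n / Suc n) - - ((t - x) ^ Suc n / Suc n))"
  proof (rule nn_integral_FTC_Icc)
    fix y
    show "((\<lambda>y. - ((t - y) ^ Suc n / Suc n)) has_real_derivative (t - y) ^ n) (at y)"
      by (auto intro!: derivative_eq_intros simp del: power_Suc of_nat_Suc)
  qed (use assms in auto)
  then show ?thesis by simp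
qed

lemma pred_snd_in_atLeast_fst [measurable]:
  "Measurable.pred (borel \<Otimes>\<^sub>M borel) (\<lambda>p::real \<times> real. snd p \<in> {fst p..})"
  unfolding atLeast_iff by measurable

lemma pred_fst_in_atLeast_snd [measurable]:
  "Measurable.pred (borel \<Otimes>\<^sub>M borel) (\<lambda>p::real \<times> real. fst p \<in> {snd p..})"
  unfolding atLeast_iff by measurable

locale tail_with_moments =
  fixes S :: "real \<Rightarrow> real"
  assumes borel_measurable_S [measurable]: "S \<in> borel_measurable borel"
    and S_pos: "0 \<le> t \<Longrightarrow> 0 < S t"
    and S_antimono: "0 \<le> s \<Longrightarrow> s \<le> t \<Longrightarrow> S t \<le> S s"
    and moments: "set_integrable lborel {0..} (\<lambda>t. t ^ n * S t)"
begin

lemma set_integrable_tail_moment_integrand: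
  assumes "0 \<le> x"
  shows "set_integrable lborel {x..} (\<lambda>t. (t - x) ^ n * S t)"
proof (rule set_integrable_bound)
  show "set_integrable lborel {x..} (\<lambda>t. t ^ n * S t)"
    using assms by (intro set_integrable_subset[OF moments]) auto
  show "AE t\<in>{x..} in lborel. norm ((t - x) ^ n * S t) \<le> norm (t ^ n * S t)"
    using assms S_pos by (auto intro!: mult_right_mono power_mono simp: abs_mult less_imp_le)
qed (simp add: set_borel_measurable_def)

lemma tail_moment_nonneg: "0 \<le> x \<Longrightarrow> 0 \<le> tail_moment S n x"
  unfolding tail_moment_def set_lebesgue_integral_def using S_pos
  by (intro integral_nonneg_AE) (auto simp: less_imp_le indicator_def)

lemma nn_integral_tail_moment:
  assumes "0 \<le> x"
  shows "(\<integral>\<^sup>+t. ennreal (indicator {x..} t * ((t - x) ^ n * S t)) \<partial>lborel) =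
    ennreal (tail_moment S n x)"
  using set_integrable_tail_moment_integrand[OF assms, of n] assms S_pos
  unfolding tail_moment_def set_lebesgue_integral_def set_integrable_def
  by (subst nn_integral_eq_integral) (auto simp: less_imp_le indicator_def)

lemma borel_measurable_tail_moment [measurable]: "tail_moment S n \<in> borel_measurable borel"
  unfolding tail_moment_def[abs_def] set_lebesgue_integral_def
  by measurable

lemma nn_integral_tail_moment_kernel:
  assumes "0 \<le> x"
  shows "(\<integral>\<^sup>+y. ennreal (indicator {x..} y * (indicator {y..} t * ((t - y) ^ n * S t))) \<partial>lborel) =
    ennreal (1 / Suc n) * ennreal (indicator {x..} t * ((t - x) ^ Suc n * S t))"
proof (cases "x \<le> t")
  case True
  then have St: "0 < S t"
    using assms S_pos by simp
  have "(\<integral>\<^sup>+y. ennreal (indicator {x..} y * (indicator {y..} t * ((t - y) ^ n * S t))) \<partial>lborel) =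
      (\<integral>\<^sup>+y. ennreal (S t) * (ennreal ((t - y) ^ n) * indicator {x..t} y) \<partial>lborel)"
    using St True by (intro nn_integral_cong) (auto simp: indicator_def ennreal_mult less_imp_le mult.commute)
  also have "\<dots> = ennreal (S t) * ennreal ((t - x) ^ Suc n / Suc n)"
    using True by (simp add: nn_integral_cmult nn_integral_power_diff)
  also have "\<dots> = ennreal (1 / Suc n) * ennreal ((t - x) ^ Suc n * S t)"
    using St by (simp add: ennreal_mult'[symmetric] less_imp_le mult_ac del: power_Suc)
  finally show ?thesis
    using True by simp
next
  case False
  then have "(\<lambda>y. ennreal (indicator {x..} y * (indicator {y..} t * ((t - y) ^ n * S t)))) =
      (\<lambda>y. 0)"
    by (auto simp: indicator_def fun_eq_iff)
  then show ?thesis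
    using False by simp
qed

lemma nn_integral_tail_moment_Suc:
  assumes "0 \<le> x"
  shows "(\<integral>\<^sup>+y. ennreal (indicator {x..} y * tail_moment S n y) \<partial>lborel) =
    ennreal (tail_moment S (Suc n) x / Suc n)"
proof -
  let ?g = "\<lambda>y t. ennreal (indicator {x..} y * (indicator {y..} t * ((t - y) ^ n * S t)))"
  have "(\<integral>\<^sup>+y. ennreal (indicator {x..} y * tail_moment S n y) \<partial>lborel) =
      (\<integral>\<^sup>+y. \<integral>\<^sup>+t. ?g y t \<partial>lborel \<partial>lborel)"
  proof (intro nn_integral_cong)
    fix y :: real
    show "ennreal (indicator {x..} y * tail_moment S n y) = (\<integral>\<^sup>+t. ?g y t \<partial>lborel)"
      using assms nn_integral_tail_moment[of y n] by (cases "x \<le> y") auto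
  qed
  also have "\<dots> = (\<integral>\<^sup>+t. \<integral>\<^sup>+y. ?g y t \<partial>lborel \<partial>lborel)"
    by (rule lborel_pair.Fubini',
        subst measurable_cong_sets[OF sets_pair_measure_cong[OF sets_lborel sets_lborel] refl])
       measurable
  also have "\<dots> = (\<integral>\<^sup>+t. ennreal (1 / Suc n) *
      ennreal (indicator {x..} t * ((t - x) ^ Suc n * S t)) \<partial>lborel)"
    using assms by (simp add: nn_integral_tail_moment_kernel)
  also have "\<dots> = ennreal (1 / Suc n) * ennreal (tail_moment S (Suc n) x)"
    using assms by (simp add: nn_integral_cmult nn_integral_tail_moment del: power_Suc)
  finally show ?thesis
    using tail_moment_nonneg[OF assms] by (simp add: ennreal_mult[symmetric])
qed

lemma set_integral_tail_moment:
  assumes "0 \<le> x"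
  shows "(LINT y:{x..}|lborel. tail_moment S n y) = tail_moment S (Suc n) x / Suc n"
proof -
  have "0 \<le> indicator {x..} y * tail_moment S n y" for y
    using tail_moment_nonneg assms by (simp add: indicator_def)
  then show ?thesis
    unfolding set_lebesgue_integral_def
    using nn_integral_tail_moment_Suc[OF assms] tail_moment_nonneg[OF assms, of "Suc n"]
    by (simp add: integral_eq_nn_integral)
qed

lemma tail_moment_shift: "tail_moment S n x = (LINT u:{0..}|lborel. u ^ n * S (u + x))"
  unfolding tail_moment_def set_lebesgue_integral_def
  by (subst lborel_integral_real_affine[where c = 1 and t = x])
     (auto intro!: Bochner_Integration.integral_cong simp: indicator_def add.commute)

lemma set_integrable_shifted_moment_integrand:
  assumes "0 \<le> x"
  shows "set_integrable lborel {0..} (\<lambda>u. u ^ n * S (u + x))"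
proof (rule set_integrable_bound[OF moments])
  show "AE u\<in>{0..} in lborel. norm (u ^ n * S (u + x)) \<le> norm (u ^ n * S u)"
    using assms S_pos S_antimono by (auto intro!: mult_left_mono simp: abs_mult less_imp_le)
qed (simp add: set_borel_measurable_def)

lemma tail_moment_lower_bound:
  assumes "0 \<le> a" "a \<le> b"
  shows "a ^ n * S b * (b - a) \<le> tail_moment S n 0"
proof -
  have "a ^ n * S b * (b - a) = (\<integral>t. a ^ n * S b * indicator {a..b} t \<partial>lborel)"
    using assms by simp
  also have "\<dots> \<le> (\<integral>t. indicator {0..} t * (t ^ n * S t) \<partial>lborel)"
  proof (rule integral_mono)
    show "integrable lborel (\<lambda>t. indicator {0..} t * (t ^ n * S t))"
      using moments unfolding set_integrable_def by simp
    fix t :: real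
    show "a ^ n * S b * indicator {a..b} t \<le> indicator {0..} t * (t ^ n * S t)"
      using assms S_pos[of t] S_pos[of b] S_antimono[of t b]
      by (auto simp: indicator_def less_imp_le intro!: mult_mono power_mono)
  qed (use assms in \<open>simp add: integrable_indicator_iff\<close>)
  also have "\<dots> = tail_moment S n 0"
    by (simp add: tail_moment_def set_lebesgue_integral_def)
  finally show ?thesis .
qed

lemma tail_moment_pos: "0 < tail_moment S n 0"
  using tail_moment_lower_bound[of 1 2 n] S_pos[of 2] by simp

lemma shifted_integrand_deviation:
  assumes "0 \<le> x" "0 \<le> L" "L \<le> 1" "0 \<le> e" "0 \<le> u" "0 \<le> M"
    and near: "\<And>u. M \<le> u \<Longrightarrow> \<bar>S (u + x) - L * S u\<bar> \<le> e * S u"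
  shows "\<bar>u ^ n * (S (u + x) - L * S u)\<bar> \<le> e * (u ^ n * S u) + M ^ n * S 0 * indicator {0..M} u"
proof -
  have Su: "0 \<le> S (u + x)" "S (u + x) \<le> S u" "S u \<le> S 0"
    using assms S_pos[of "u + x"] S_antimono[of u "u + x"] S_antimono[of 0 u] by auto
  show ?thesis
  proof (cases "M \<le> u")
    case True
    have "u ^ n * \<bar>S (u + x) - L * S u\<bar> \<le> u ^ n * (e * S u)"
      using assms near[OF True] by (intro mult_left_mono) auto
    moreover have "0 \<le> M ^ n * S 0 * indicator {0..M} u"
      using S_pos[of 0] assms by simp
    ultimately show ?thesis
      using assms by (simp add: abs_mult mult_ac)
  next
    case False
    have "0 \<le> L * S u" "L * S u \<le> S u"
      using Su assms by (simp_all add: mult_left_le_one_le)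
    then have "\<bar>S (u + x) - L * S u\<bar> \<le> S 0"
      using Su by (simp add: abs_le_iff)
    then have "u ^ n * \<bar>S (u + x) - L * S u\<bar> \<le> M ^ n * S 0"
      using assms False by (intro mult_mono power_mono) auto
    moreover have "0 \<le> e * (u ^ n * S u)"
      using Su assms by simp
    ultimately show ?thesis
      using assms False by (simp add: abs_mult)
  qed
qed

lemma tail_moment_deviation:
  assumes "0 \<le> x" "0 \<le> L" "L \<le> 1" "0 \<le> M" "0 \<le> e"
    and near: "\<And>u. M \<le> u \<Longrightarrow> \<bar>S (u + x) - L * S u\<bar> \<le> e * S u"
  shows "\<bar>tail_moment S n x - L * tail_moment S n 0\<bar> \<le> e * tail_moment S n 0 + M ^ Suc n * S 0"
proof -
  define D where "D u = indicator {0..} u * (u ^ n * (S (u + x) - L * S u))" for u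
  define B where "B u = e * (indicator {0..} u * (u ^ n * S u)) + M ^ n * S 0 * indicator {0..M} u" for u
  have D_le_B: "\<bar>D u\<bar> \<le> B u" for u
  proof (cases "0 \<le> u")
    case True
    then show ?thesis
      using shifted_integrand_deviation[OF assms(1-3,5) True assms(4) near] by (simp add: D_def B_def)
  qed (simp add: D_def B_def)
  have int_D: "integrable lborel D"
    using set_integral_diff(1)[OF set_integrable_shifted_moment_integrand[OF assms(1), of n]
        set_integrable_mult_right[OF moments[of n], of L]]
    unfolding D_def set_integrable_def by (simp add: right_diff_distrib mult_ac)
  have int_B: "integrable lborel B"
    using moments[of n] unfolding B_def set_integrable_def
    by (intro Bochner_Integration.integrable_add integrable_mult_right)
       (simp_all add: integrable_indicator_iff emeasure_lborel_Icc_eq)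
  have "tail_moment S n x - L * tail_moment S n 0 = (\<integral>u. D u \<partial>lborel)"
    using set_integral_diff(2)[OF set_integrable_shifted_moment_integrand[OF assms(1), of n]
        set_integrable_mult_right[OF moments[of n], of L]]
    unfolding tail_moment_shift[of n x] tail_moment_shift[of n 0] D_def set_lebesgue_integral_def
    by (simp add: right_diff_distrib mult_ac)
  also have "\<bar>\<dots>\<bar> \<le> (\<integral>u. B u \<partial>lborel)"
    using integral_abs_bound[of lborel D] integral_mono[OF _ int_B D_le_B] integrable_abs[OF int_D]
    by linarith
  also have "\<dots> = e * tail_moment S n 0 + M ^ Suc n * S 0"
    using moments assms unfolding B_def set_integrable_def
    by (simp add: tail_moment_def set_lebesgue_integral_def)
  finally show ?thesis .
qed

lemma tail_moment_ratio_deviation: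
  assumes "0 \<le> x" "0 \<le> L" "L \<le> 1" "1 \<le> M" "0 \<le> e"
    and near: "\<And>u. M \<le> u \<Longrightarrow> \<bar>S (u + x) - L * S u\<bar> \<le> e * S u"
  shows "\<bar>tail_moment S n x / tail_moment S n 0 - L\<bar> \<le> e + M * S 0 / S (2 * M + 1) * (1 / 2) ^ n"
proof -
  define W where "W = tail_moment S n 0"
  have W: "0 < W"
    unfolding W_def by (rule tail_moment_pos)
  have c: "0 < S (2 * M + 1)"
    using assms S_pos by simp
  have W_lower_pos: "0 < (2 * M) ^ n * S (2 * M + 1)"
    using assms c by simp
  have W_lower: "(2 * M) ^ n * S (2 * M + 1) \<le> W"
    using tail_moment_lower_bound[of "2 * M" "2 * M + 1" n] assms unfolding W_def by simp
  have "\<bar>tail_moment S n x / W - L\<bar> = \<bar>tail_moment S n x - L * W\<bar> / W"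
    using W by (simp add: field_simps)
  also have "\<dots> \<le> (e * W + M ^ Suc n * S 0) / W"
    using tail_moment_deviation[OF assms(1-3) _ assms(5) near, of M n] assms W
    unfolding W_def by (simp add: divide_right_mono)
  also have "\<dots> = e + M ^ Suc n * S 0 / W"
    using W by (simp add: field_simps)
  also have "\<dots> \<le> e + M ^ Suc n * S 0 / ((2 * M) ^ n * S (2 * M + 1))"
    using W_lower W_lower_pos S_pos[of 0] assms by (intro add_left_mono divide_left_mono) auto
  also have "\<dots> = e + M * S 0 / S (2 * M + 1) * (1 / 2) ^ n"
    using assms c by (simp add: power_mult_distrib field_simps)
  finally show ?thesis
    unfolding W_def .
qed

lemma shift_ratio_limit_bounds:
  assumes "0 \<le> x" and lim: "((\<lambda>u. S (u + x) / S u) \<longlongrightarrow> L) at_top"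
  shows "0 \<le> L" "L \<le> 1"
proof -
  have bounds: "0 \<le> S (u + x) / S u \<and> S (u + x) / S u \<le> 1" if "0 \<le> u" for u
    using that assms S_pos[of u] S_pos[of "u + x"] S_antimono[of u "u + x"] by simp
  have "eventually (\<lambda>u. 0 \<le> S (u + x) / S u \<and> S (u + x) / S u \<le> 1) at_top"
    using eventually_ge_at_top[of 0] by (rule eventually_mono) (rule bounds)
  then show "0 \<le> L" "L \<le> 1"
    by (intro tendsto_lowerbound[OF lim] tendsto_upperbound[OF lim]; auto elim: eventually_mono)+
qed

lemma tail_moment_ratio_tendsto:
  assumes "0 \<le> x" and lim: "((\<lambda>u. S (u + x) / S u) \<longlongrightarrow> L) at_top"
  shows "(\<lambda>n. tail_moment S n x / tail_moment S n 0) \<longlonglongrightarrow> L"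
proof (rule tendstoI)
  fix r :: real
  assume "0 < r"
  note L = shift_ratio_limit_bounds[OF assms]
  obtain M0 where M0: "\<And>u. M0 \<le> u \<Longrightarrow> \<bar>S (u + x) / S u - L\<bar> < r / 2"
    using lim \<open>0 < r\<close> unfolding tendsto_iff dist_real_def eventually_at_top_linorder
    by (metis half_gt_zero)
  define M where "M = max M0 1"
  have near: "\<bar>S (u + x) - L * S u\<bar> \<le> r / 2 * S u" if "M \<le> u" for u
  proof -
    have "0 < S u"
      using that S_pos by (simp add: M_def)
    then have "\<bar>S (u + x) - L * S u\<bar> = S u * \<bar>S (u + x) / S u - L\<bar>"
      by (simp add: field_simps abs_mult)
    also have "\<dots> \<le> S u * (r / 2)"
      using M0[of u] that \<open>0 < S u\<close> by (intro mult_left_mono) (auto simp: M_def)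
    finally show ?thesis
      by (simp add: mult.commute)
  qed
  define C where "C = M * S 0 / S (2 * M + 1)"
  have "(\<lambda>n. C * (1 / 2) ^ n) \<longlonglongrightarrow> 0"
    by (intro tendsto_mult_right_zero LIMSEQ_power_zero) simp
  then have "eventually (\<lambda>n. C * (1 / 2) ^ n < r / 2) sequentially"
    using \<open>0 < r\<close> by (intro order_tendstoD(2)) auto
  then show "eventually (\<lambda>n. dist (tail_moment S n x / tail_moment S n 0) L < r) sequentially"
  proof (rule eventually_mono)
    fix n
    assume "C * (1 / 2) ^ n < r / 2"
    moreover have "\<bar>tail_moment S n x / tail_moment S n 0 - L\<bar> \<le> r / 2 + C * (1 / 2) ^ n"
      unfolding C_def using \<open>0 < r\<close> L near assms(1)
      by (intro tail_moment_ratio_deviation) (auto simp: M_def)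
    ultimately show "dist (tail_moment S n x / tail_moment S n 0) L < r"
      by (simp add: dist_real_def)
  qed
qed

lemma iter_tail_eq_tail_moment_ratio:
  assumes tail: "\<And>y. 0 \<le> y \<Longrightarrow> (LINT t:{y..}|lborel. f t) = S y" and "0 \<le> x"
  shows "iter_tail f (Suc (Suc n)) x = tail_moment S n x / tail_moment S n 0"
  using \<open>0 \<le> x\<close>
proof (induction n arbitrary: x)
  case 0
  have "(LINT t:{y..}|lborel. iter_tail f (Suc 0) t) = tail_moment S 0 y" if "0 \<le> y" for y
    unfolding tail_moment_def using that tail
    by (intro set_lebesgue_integral_cong) (auto simp: iter_tail_Suc_0)
  then show ?case
    using "0" by (simp add: iter_tail_Suc_Suc)
next
  case (Suc n)
  have "(LINT t:{y..}|lborel. iter_tail f (Suc (Suc n)) t) =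
      tail_moment S (Suc n) y / Suc n / tail_moment S n 0" if "0 \<le> y" for y
  proof -
    have "(LINT t:{y..}|lborel. iter_tail f (Suc (Suc n)) t) =
        (LINT t:{y..}|lborel. tail_moment S n t / tail_moment S n 0)"
      using that Suc.IH by (intro set_lebesgue_integral_cong) auto
    then show ?thesis
      using set_integral_tail_moment[OF that, of n] by simp
  qed
  from this[OF Suc.prems] this[OF order_refl] show ?case
    using tail_moment_pos[of n] tail_moment_pos[of "Suc n"]
    by (simp add: iter_tail_Suc_Suc[of f "Suc n"])
qed

end

lemma set_integrable_inverse_square: "set_integrable lborel {0..} (\<lambda>t::real. 1 / (1 + t) ^ 2)"
proof -
  have "(\<integral>\<^sup>+t. ennreal (1 / (1 + t) ^ 2) * indicator {0..} t \<partial>lborel) =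
      ennreal (0 - (- 1 / (1 + 0)))"
  proof (rule nn_integral_FTC_atLeast)
    fix t :: real
    assume "0 \<le> t"
    then show "((\<lambda>t. - 1 / (1 + t)) has_real_derivative 1 / (1 + t) ^ 2) (at t)"
      by (auto intro!: derivative_eq_intros simp: power2_eq_square)
  next
    show "((\<lambda>t::real. - 1 / (1 + t)) \<longlongrightarrow> 0) at_top"
      by real_asymp
  qed auto
  then show ?thesis
    unfolding set_integrable_def
    by (intro integrableI_nn_integral_finite[where x = 1]) (auto simp: nn_integral_set_ennreal)
qed

lemma set_integrable_of_decay:
  fixes g :: "real \<Rightarrow> real"
  assumes cont: "continuous_on {0..} g"
    and decay: "((\<lambda>t. (1 + t) ^ 2 * g t) \<longlongrightarrow> 0) at_top"
  shows "set_integrable lborel {0..} g"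
proof -
  define h where "h t = (1 + t) ^ 2 * g t" for t
  have "eventually (\<lambda>t. dist (h t) 0 < 1) at_top"
    using decay unfolding h_def by (rule tendstoD) simp
  then obtain N where N: "\<And>t. N \<le> t \<Longrightarrow> \<bar>h t\<bar> < 1"
    by (auto simp: eventually_at_top_linorder dist_real_def)
  have "compact (h ` {0..N})"
    unfolding h_def by (intro compact_continuous_image continuous_intros continuous_on_subset[OF cont]) auto
  then obtain B0 where B0: "\<forall>t\<in>{0..N}. \<bar>h t\<bar> \<le> B0"
    by (auto dest!: compact_imp_bounded simp: bounded_real)
  define B where "B = max 1 B0"
  have bound: "\<bar>g t\<bar> \<le> \<bar>B * (1 / (1 + t) ^ 2)\<bar>" if "0 \<le> t" for t
  proof -
    have "\<bar>h t\<bar> \<le> B"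
      using N[of t] B0[rule_format, of t] that by (cases "N \<le> t") (auto simp: B_def)
    then show ?thesis
      using that by (simp add: h_def B_def abs_mult field_simps)
  qed
  have "set_integrable lborel {0..} (\<lambda>t. B * (1 / (1 + t) ^ 2))"
    by (rule set_integrable_mult_right) (rule set_integrable_inverse_square)
  moreover have "set_borel_measurable lborel {0..} g"
    unfolding set_borel_measurable_def
    using borel_measurable_continuous_on_indicator[OF _ cont] by simp
  ultimately show ?thesis
    using bound by (auto intro: set_integrable_bound)
qed

lemma continuous_on_exp_neg_powr:
  assumes "0 < \<alpha>"
  shows "continuous_on {0..} (\<lambda>t::real. exp (- (t powr \<alpha>)))"
proof -
  have "continuous_on {0..} (\<lambda>t::real. t powr \<alpha>)"
    using assms by (intro continuous_on_powr') (auto intro: continuous_intros)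
  then show ?thesis
    by (intro continuous_on_exp continuous_on_minus)
qed

lemma tail_with_moments_weibull:
  assumes "0 < \<alpha>"
  shows "tail_with_moments (\<lambda>t. exp (- (t powr \<alpha>)))"
proof
  fix n
  show "set_integrable lborel {0..} (\<lambda>t. t ^ n * exp (- (t powr \<alpha>)))"
  proof (rule set_integrable_of_decay)
    show "continuous_on {0..} (\<lambda>t. t ^ n * exp (- (t powr \<alpha>)))"
      by (rule continuous_on_mult[OF continuous_on_power[OF continuous_on_id]
            continuous_on_exp_neg_powr[OF assms]])
    show "((\<lambda>t. (1 + t) ^ 2 * (t ^ n * exp (- (t powr \<alpha>)))) \<longlongrightarrow> 0) at_top"
      using assms by real_asymp
  qed
qed (use assms in \<open>simp_all add: powr_mono2\<close>)

lemma weibull_density_tail: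
  assumes "0 < \<alpha>" "0 \<le> x"
  shows "(LINT t:{x..}|lborel. weibull_density \<alpha> t) = exp (- (x powr \<alpha>))"
proof -
  define F where "F t = - exp (- (t powr \<alpha>))" for t
  have "continuous_on {0<..} (\<lambda>t. \<alpha> * t powr (\<alpha> - 1) * exp (- (t powr \<alpha>)))"
    by (intro continuous_intros) auto
  then have "continuous_on {0<..} (weibull_density \<alpha>)"
    by (rule continuous_on_cong[THEN iffD1, rotated 2]) (auto simp: weibull_density_def)
  then have cont: "isCont (weibull_density \<alpha>) t" if "0 < t" for t
    using that by (simp add: continuous_on_eq_continuous_at)
  have "continuous_on {0..} F"
    unfolding F_def by (rule continuous_on_minus[OF continuous_on_exp_neg_powr[OF assms(1)]])
  then have "(F \<longlongrightarrow> F x) (at_right x)"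
    using assms by (auto simp: continuous_on_def intro: tendsto_within_subset)
  have "(LBINT t=ereal x..\<infinity>. weibull_density \<alpha> t) = 0 - F x"
  proof (rule interval_integral_FTC_nonneg)
    fix t
    assume "ereal x < ereal t"
    then have "0 < t"
      using assms by simp
    then show "(F has_real_derivative weibull_density \<alpha> t) (at t)"
      unfolding F_def weibull_density_def
      by (auto intro!: derivative_eq_intros simp: powr_diff field_simps)
    show "isCont (weibull_density \<alpha>) t"
      using cont \<open>0 < t\<close> .
  next
    show "((F \<circ> real_of_ereal) \<longlongrightarrow> F x) (at_right (ereal x))"
      unfolding ereal_tendsto_simps by fact
    have "(F \<longlongrightarrow> 0) at_top"
      unfolding F_def using assms by real_asymp
    then show "((F \<circ> real_of_ereal) \<longlongrightarrow> 0) (at_left \<infinity>)"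
      unfolding ereal_tendsto_simps .
  qed (use assms in \<open>auto simp: weibull_density_def\<close>)
  moreover have "(LINT t:{x..}|lborel. weibull_density \<alpha> t) =
      (LINT t:{x<..}|lborel. weibull_density \<alpha> t)"
    using AE_lborel_singleton[of x]
    by (intro set_integral_cong_set)
       (auto simp: set_borel_measurable_def weibull_density_def elim: eventually_mono)
  ultimately show ?thesis
    by (simp add: interval_integral_to_infinity_eq F_def)
qed

lemma weibull_tail_ratio_tendsto:
  fixes \<alpha> x :: real
  assumes "0 < \<alpha>" "0 < x"
  shows "((\<lambda>u. exp (- ((u + x) powr \<alpha>)) / exp (- (u powr \<alpha>))) \<longlongrightarrow>
    (if \<alpha> > 1 then 0 else if \<alpha> = 1 then exp (- x) else 1)) at_top"
proof -
  consider "\<alpha> > 1" | "\<alpha> = 1" | "\<alpha> < 1"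
    using linorder_less_linear[of 1 \<alpha>] by blast
  then show ?thesis
  proof cases
    case 1
    then show ?thesis
      using assms by simp real_asymp
  next
    case 2
    then show ?thesis
      by simp (real_asymp simp add: exp_minus)
  next
    case 3
    then show ?thesis
      using assms by simp real_asymp
  qed
qed

theorem theorem6:
  fixes \<alpha> x :: real
  assumes "\<alpha> > 0" and "x > 0"
  shows "(\<lambda>s. iter_tail (weibull_density \<alpha>) s x) \<longlonglongrightarrow>
           (if \<alpha> > 1 then 0 else if \<alpha> = 1 then exp (- x) else 1)"
proof -
  let ?S = "\<lambda>t. exp (- (t powr \<alpha>))"
  let ?L = "if \<alpha> > 1 then 0 else if \<alpha> = 1 then exp (- x) else 1"
  interpret tail_with_moments ?S
    using assms(1) by (rule tail_with_moments_weibull)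
  have "(\<lambda>n. iter_tail (weibull_density \<alpha>) (Suc (Suc n)) x) =
      (\<lambda>n. tail_moment ?S n x / tail_moment ?S n 0)"
    using assms weibull_density_tail by (simp add: iter_tail_eq_tail_moment_ratio)
  also have "\<dots> \<longlonglongrightarrow> ?L"
    using assms by (intro tail_moment_ratio_tendsto weibull_tail_ratio_tendsto) auto
  finally have "(\<lambda>n. iter_tail (weibull_density \<alpha>) (n + 2) x) \<longlonglongrightarrow> ?L"
    by (simp add: numeral_2_eq_2)
  then show ?thesis
    by (rule LIMSEQ_offset)
qed

end
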